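(* Let $\Omega\subseteq\mathbb{R}^n$ be open and let $f\in\mathbb{A}(\Omega)$ be D-continuous. If there is a dense subset $D$ of $\Omega$ such that $w(f(x))=0$ for all $x\in D$, then $f$ is H-continuous.
   Context: $\overline{\mathbb{R}}=\mathbb{R}\cup\{\pm\infty\}$, $\mathbb{I}\overline{\mathbb{R}}$ is the set of closed intervals $[\underline a,\overline a]$ with $\underline a\le\overline a$ in $\overline{\mathbb{R}}$, $a\in\overline{\mathbb{R}}$ identified with $[a,a]$. The width $w(a)$ of $a=[\underline a,\overline a]$ is $\overline a-\underline a$ if both endpoints are finite, $\infty$ if $\underline a<\overline a$ and one endpoint is infinite, and $0$ if $\underline a=\overline a=\pm\infty$. $\mathbb{A}(\Omega)$ is the set of functions $\Omega\to\mathbb{I}\overline{\mathbb{R}}$. $B_\delta(x)=\{y\in\Omega:\|x-y\|<\delta\}$. For dense $D\subseteq\Omega$ and $f\in\mathbb{A}(D)$: $I(D,\Omega,f)(x)=\sup_{\delta>0}\inf\{z\in f(y):y\in B_\delta(x)\cap D\}$, $S(D,\Omega,f)(x)=\inf_{\delta>0}\sup\{z\in f(y):y\in B_\delta(x)\cap D\}$, $F(D,\Omega,f)(x)=[I(D,\Omega,f)(x),S(D,\Omega,f)(x)]$; $F(f)=F(\Omega,\Omega,f)$. $f$ is D-continuous if $F(D,\Omega,f)=f$ for every dense $D\subseteq\Omega$ (using the restriction of $f$ to $D$); H-continuous if for every $g\in\mathbb{A}(\Omega)$ with $g(x)\subseteq f(x)$ for all $x$ one has $F(g)=f$. *)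

theory Defs
  imports "HOL-Analysis.Analysis" "HOL-Library.Extended_Real"
begin

text \<open>An extended-real interval [a,b] with a \<le> b is represented by the pair (a,b).\<close>
type_synonym iv = "ereal \<times> ereal"

definition iv_mem :: "ereal \<Rightarrow> iv \<Rightarrow> bool" where
  "iv_mem z a \<longleftrightarrow> fst a \<le> z \<and> z \<le> snd a"

definition iv_subset :: "iv \<Rightarrow> iv \<Rightarrow> bool" where
  "iv_subset a b \<longleftrightarrow> (\<forall>z. iv_mem z a \<longrightarrow> iv_mem z b)"

definition iv_width :: "iv \<Rightarrow> ereal" where
  "iv_width a = (if fst a = snd a then 0
                 else if \<bar>fst a\<bar> \<noteq> \<infinity> \<and> \<bar>snd a\<bar> \<noteq> \<infinity> then snd a - fst a
                 else \<infinity>)"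

text \<open>f belongs to A(Omega): every value on Omega is a genuine interval.\<close>
definition interval_fun :: "('a \<Rightarrow> iv) \<Rightarrow> 'a set \<Rightarrow> bool" where
  "interval_fun f \<Omega> \<longleftrightarrow> (\<forall>x\<in>\<Omega>. fst (f x) \<le> snd (f x))"

definition Bdelta :: "'a::metric_space set \<Rightarrow> real \<Rightarrow> 'a \<Rightarrow> 'a set" where
  "Bdelta \<Omega> \<delta> x = {y\<in>\<Omega>. dist x y < \<delta>}"

definition Ilow :: "'a::metric_space set \<Rightarrow> 'a set \<Rightarrow> ('a \<Rightarrow> iv) \<Rightarrow> 'a \<Rightarrow> ereal" where
  "Ilow D \<Omega> f x = (SUP \<delta>\<in>{0<..}. Inf {z. \<exists>y\<in>Bdelta \<Omega> \<delta> x \<inter> D. iv_mem z (f y)})"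

definition Supp :: "'a::metric_space set \<Rightarrow> 'a set \<Rightarrow> ('a \<Rightarrow> iv) \<Rightarrow> 'a \<Rightarrow> ereal" where
  "Supp D \<Omega> f x = (INF \<delta>\<in>{0<..}. Sup {z. \<exists>y\<in>Bdelta \<Omega> \<delta> x \<inter> D. iv_mem z (f y)})"

definition Fop :: "'a::metric_space set \<Rightarrow> 'a set \<Rightarrow> ('a \<Rightarrow> iv) \<Rightarrow> 'a \<Rightarrow> iv" where
  "Fop D \<Omega> f x = (Ilow D \<Omega> f x, Supp D \<Omega> f x)"

definition dense_in :: "'a::topological_space set \<Rightarrow> 'a set \<Rightarrow> bool" where
  "dense_in D \<Omega> \<longleftrightarrow> D \<subseteq> \<Omega> \<and> \<Omega> \<subseteq> closure D"

definition D_continuous :: "'a::metric_space set \<Rightarrow> ('a \<Rightarrow> iv) \<Rightarrow> bool" where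
  "D_continuous \<Omega> f \<longleftrightarrow> (\<forall>D. dense_in D \<Omega> \<longrightarrow> (\<forall>x\<in>\<Omega>. Fop D \<Omega> f x = f x))"

definition H_continuous :: "'a::metric_space set \<Rightarrow> ('a \<Rightarrow> iv) \<Rightarrow> bool" where
  "H_continuous \<Omega> f \<longleftrightarrow> (\<forall>g. interval_fun g \<Omega> \<and> (\<forall>x\<in>\<Omega>. iv_subset (g x) (f x))
      \<longrightarrow> (\<forall>x\<in>\<Omega>. Fop \<Omega> \<Omega> g x = f x))"

end

theory Submission
  imports Defs
begin

text \<open>
  Let \<open>g \<subseteq> f\<close> pointwise and let \<open>D\<close> be dense with \<open>f\<close> point-valued on \<open>D\<close>. On \<open>D\<close> the
  nonempty interval \<open>g y\<close> is squeezed into the point \<open>f y\<close>, so \<open>f\<close> restricted to \<open>D\<close> is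
  pointwise contained in \<open>g\<close>. Since \<open>F\<close> is monotone, \<open>F(D,\<Omega>,f) \<subseteq> F(g) \<subseteq> F(f)\<close>, and
  D-continuity makes both outer terms equal to \<open>f\<close>.
\<close>

lemma iv_width_eq_0_iff: "iv_width a = 0 \<longleftrightarrow> fst a = snd a"
  unfolding iv_width_def by (cases "fst a"; cases "snd a") auto

lemma iv_subset_iff:
  assumes "fst a \<le> snd a"
  shows "iv_subset a b \<longleftrightarrow> fst b \<le> fst a \<and> snd a \<le> snd b"
  using assms unfolding iv_subset_def iv_mem_def by (meson order_trans order_refl)

lemma iv_subset_point_eq:
  assumes "fst a \<le> snd a" and "iv_subset a b" and "fst b = snd b"
  shows "a = b"
  using assms by (metis iv_subset_iff order.antisym order.trans prod_eq_iff)

lemma dense_in_refl: "dense_in \<Omega> \<Omega>"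
  unfolding dense_in_def using closure_subset by blast

lemma Ilow_Supp_mono:
  assumes "D' \<subseteq> D" and "\<And>y. y \<in> D' \<Longrightarrow> iv_subset (g y) (f y)"
  shows "Ilow D \<Omega> f x \<le> Ilow D' \<Omega> g x" and "Supp D' \<Omega> g x \<le> Supp D \<Omega> f x"
proof -
  have values_subset:
    "{z. \<exists>y\<in>Bdelta \<Omega> \<delta> x \<inter> D'. iv_mem z (g y)} \<subseteq> {z. \<exists>y\<in>Bdelta \<Omega> \<delta> x \<inter> D. iv_mem z (f y)}"
    for \<delta>
    using assms unfolding iv_subset_def by blast
  show "Ilow D \<Omega> f x \<le> Ilow D' \<Omega> g x"
    unfolding Ilow_def by (intro SUP_mono' Inf_superset_mono values_subset)
  show "Supp D' \<Omega> g x \<le> Supp D \<Omega> f x"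
    unfolding Supp_def by (intro INF_mono' Sup_subset_mono values_subset)
qed

lemma Fop_eq_if_between:
  assumes "Ilow D \<Omega> f x \<le> Ilow D' \<Omega> g x" "Supp D' \<Omega> g x \<le> Supp D \<Omega> f x"
    and "Ilow D' \<Omega> g x \<le> Ilow E \<Omega> h x" "Supp E \<Omega> h x \<le> Supp D' \<Omega> g x"
    and "Fop D \<Omega> f x = c" "Fop E \<Omega> h x = c"
  shows "Fop D' \<Omega> g x = c"
  using assms unfolding Fop_def prod_eq_iff by (metis fst_conv snd_conv order.antisym)

lemma H_continuous_if_D_continuous_point_valued_on_dense:
  fixes \<Omega> :: "'a::metric_space set"
  assumes "D_continuous \<Omega> f" and "dense_in D \<Omega>" and "\<And>x. x \<in> D \<Longrightarrow> fst (f x) = snd (f x)"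
  shows "H_continuous \<Omega> f"
  unfolding H_continuous_def
proof (intro allI impI ballI)
  fix g x
  assume g: "interval_fun g \<Omega> \<and> (\<forall>y\<in>\<Omega>. iv_subset (g y) (f y))" and "x \<in> \<Omega>"
  have "D \<subseteq> \<Omega>"
    using assms(2) unfolding dense_in_def by blast
  have f_subset_g_on_D: "iv_subset (f y) (g y)" if "y \<in> D" for y
  proof -
    have "y \<in> \<Omega>" using \<open>D \<subseteq> \<Omega>\<close> that by blast
    then have "g y = f y"
      using g assms(3)[OF that] unfolding interval_fun_def by (simp add: iv_subset_point_eq)
    then show ?thesis by (simp add: iv_subset_def)
  qed
  have g_subset_f: "iv_subset (g y) (f y)" if "y \<in> \<Omega>" for y
    using g that by blast
  have F_f: "Fop D' \<Omega> f x = f x" if "dense_in D' \<Omega>" for D'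
    using assms(1) that \<open>x \<in> \<Omega>\<close> unfolding D_continuous_def by simp
  have "Ilow \<Omega> \<Omega> f x \<le> Ilow \<Omega> \<Omega> g x" "Supp \<Omega> \<Omega> g x \<le> Supp \<Omega> \<Omega> f x"
    using Ilow_Supp_mono[of \<Omega> \<Omega> g f] g_subset_f by simp_all
  moreover have "Ilow \<Omega> \<Omega> g x \<le> Ilow D \<Omega> f x" "Supp D \<Omega> f x \<le> Supp \<Omega> \<Omega> g x"
    using Ilow_Supp_mono[of D \<Omega> f g] f_subset_g_on_D \<open>D \<subseteq> \<Omega>\<close> by simp_all
  ultimately show "Fop \<Omega> \<Omega> g x = f x"
    using Fop_eq_if_between F_f[OF dense_in_refl] F_f[OF assms(2)] by blast
qed

theorem theorem4:
  fixes \<Omega> :: "(real ^ 'n) set" and f :: "real ^ 'n \<Rightarrow> iv"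
  assumes "open \<Omega>"
    and "interval_fun f \<Omega>"
    and "D_continuous \<Omega> f"
    and "\<exists>D. dense_in D \<Omega> \<and> (\<forall>x\<in>D. iv_width (f x) = 0)"
  shows "H_continuous \<Omega> f"
proof -
  obtain D where "dense_in D \<Omega>" and "\<forall>x\<in>D. iv_width (f x) = 0"
    using assms(4) by blast
  then show ?thesis
    using H_continuous_if_D_continuous_point_valued_on_dense[OF assms(3)]
    by (simp add: iv_width_eq_0_iff)
qed

end
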